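(* Let $q\ge2$ be an integer and $n\ge1$. On $(n+1)$ qudigits one has $$M_q=\big(H_q^{\otimes(n+1)}\big)^{-1}\,F_q^{-1}\,H_q^{\otimes(n+1)}.$$
   Context: Let $D=\{0,\ldots,q-1\}$. A qudigit is a unit vector $\sum_{k=0}^{q-1}c_k|k\rangle$ in a $q$-dimensional space with orthonormal basis $|0\rangle,\ldots,|q-1\rangle$. The $n$-ary modular addition operator $M_q$ acts on basis states by $M_q|x_1,\ldots,x_n,b\rangle=|x_1,\ldots,x_n,(b+x_1+\cdots+x_n)\bmod q\rangle$. The $n$-ary base-$q$ fanout operator $F_q$ acts by $F_q|x_1,\ldots,x_n,b\rangle=|(x_1+b)\bmod q,\ldots,(x_n+b)\bmod q,b\rangle$. The quantum Fourier transform $H_q$ on one qudigit is $H_q|a\rangle=\frac1{\sqrt q}\sum_{b=0}^{q-1}\zeta^{ab}|b\rangle$ with $\zeta=e^{2\pi i/q}$. *)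

theory Defs
  imports Complex_Main
begin

text \<open>Basis states of n+1 qudigits: lists [x_1,...,x_n,b] of length n+1 with entries in D.
  An operator on the space is given by its matrix in this basis,
  K y x = (y-th amplitude of K applied to basis vector x).\<close>

type_synonym qop = "nat list \<Rightarrow> nat list \<Rightarrow> complex"

definition basis :: "nat \<Rightarrow> nat \<Rightarrow> nat list set" where
  "basis q n = {xs. length xs = n + 1 \<and> (\<forall>x\<in>set xs. x < q)}"

definition op_mult :: "nat \<Rightarrow> nat \<Rightarrow> qop \<Rightarrow> qop \<Rightarrow> qop" where
  "op_mult q n K L = (\<lambda>y x. \<Sum>z\<in>basis q n. K y z * L z x)"

definition op_id :: qop where
  "op_id = (\<lambda>y x. if y = x then 1 else 0)"

definition op_eq :: "nat \<Rightarrow> nat \<Rightarrow> qop \<Rightarrow> qop \<Rightarrow> bool" where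
  "op_eq q n K L \<longleftrightarrow> (\<forall>y\<in>basis q n. \<forall>x\<in>basis q n. K y x = L y x)"

definition op_inv :: "nat \<Rightarrow> nat \<Rightarrow> qop \<Rightarrow> qop" where
  "op_inv q n K = (SOME L. op_eq q n (op_mult q n L K) op_id \<and> op_eq q n (op_mult q n K L) op_id)"

definition perm_op :: "(nat list \<Rightarrow> nat list) \<Rightarrow> qop" where
  "perm_op f = (\<lambda>y x. if y = f x then 1 else 0)"

definition modadd_map :: "nat \<Rightarrow> nat list \<Rightarrow> nat list" where
  "modadd_map q xs = butlast xs @ [(last xs + sum_list (butlast xs)) mod q]"

definition M_op :: "nat \<Rightarrow> qop" where
  "M_op q = perm_op (modadd_map q)"

definition fanout_map :: "nat \<Rightarrow> nat list \<Rightarrow> nat list" where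
  "fanout_map q xs = map (\<lambda>x. (x + last xs) mod q) (butlast xs) @ [last xs]"

definition F_op :: "nat \<Rightarrow> qop" where
  "F_op q = perm_op (fanout_map q)"

definition zeta :: "nat \<Rightarrow> complex" where
  "zeta q = cis (2 * pi / real q)"

definition H1 :: "nat \<Rightarrow> nat \<Rightarrow> nat \<Rightarrow> complex" where
  "H1 q b a = zeta q ^ (a * b) / complex_of_real (sqrt (real q))"

definition Htensor :: "nat \<Rightarrow> qop" where
  "Htensor q = (\<lambda>y x. \<Prod>i<length x. H1 q (y ! i) (x ! i))"

end

theory Submission
  imports Defs
begin

text \<open>Write H for the (n+1)-fold tensor power of H_q. Its entry in row y and column x is
  zeta^(x.y) / sqrt q^(n+1), where x.y = x_1 y_1 + ... + x_(n+1) y_(n+1), and orthogonality of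
  the characters c |-> zeta^(a c) makes H unitary. Modular addition and fanout are adjoint for
  this pairing modulo q: for x = (x_1, ..., x_n, b) and y = (y_1, ..., y_n, d), both (M x).y and
  x.(F y) are congruent to x_1 y_1 + ... + x_n y_n + d (x_1 + ... + x_n) + b d.
  Hence H(y, M x) = H(F y, x), that is H M = F^-1 H.\<close>

section \<open>Operators on the computational basis\<close>

lemma basis_eq_lists: "basis q n = {xs. set xs \<subseteq> {..<q} \<and> length xs = Suc n}"
  unfolding basis_def by auto

lemma finite_basis: "finite (basis q n)"
  unfolding basis_eq_lists by (simp add: finite_lists_length_eq)

lemma length_basis: "x \<in> basis q n \<Longrightarrow> length x = Suc n"
  unfolding basis_def by simp

lemma nth_basis_less: "x \<in> basis q n \<Longrightarrow> i < Suc n \<Longrightarrow> x ! i < q"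
  unfolding basis_def by auto

lemma basis_snocE:
  assumes "x \<in> basis q n"
  obtains xs b where "x = xs @ [b]" "length xs = n" "set xs \<subseteq> {..<q}" "b < q"
proof -
  obtain xs b where x: "x = xs @ [b]"
    using assms length_basis by (metis length_Suc_conv_rev)
  with assms show ?thesis by (intro that[OF x]) (auto simp: basis_def)
qed

lemma snoc_in_basis_iff: "xs @ [b] \<in> basis q n \<longleftrightarrow> length xs = n \<and> set xs \<subseteq> {..<q} \<and> b < q"
  unfolding basis_def by auto

lemma op_eq_refl: "op_eq q n A A"
  unfolding op_eq_def by simp

lemma op_eq_sym: "op_eq q n A B \<Longrightarrow> op_eq q n B A"
  unfolding op_eq_def by simp

lemma op_eq_trans [trans]: "op_eq q n A B \<Longrightarrow> op_eq q n B C \<Longrightarrow> op_eq q n A C"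
  unfolding op_eq_def by simp

lemma op_mult_cong:
  assumes "op_eq q n A A'" "op_eq q n B B'"
  shows "op_eq q n (op_mult q n A B) (op_mult q n A' B')"
  using assms unfolding op_eq_def op_mult_def by (auto intro!: sum.cong)

lemma op_mult_assoc:
  "op_mult q n A (op_mult q n B C) = op_mult q n (op_mult q n A B) C"
proof (intro ext)
  fix y x
  have "op_mult q n A (op_mult q n B C) y x = (\<Sum>z\<in>basis q n. \<Sum>w\<in>basis q n. A y z * B z w * C w x)"
    unfolding op_mult_def by (simp add: sum_distrib_left mult.assoc)
  also have "\<dots> = (\<Sum>w\<in>basis q n. \<Sum>z\<in>basis q n. A y z * B z w * C w x)"
    by (rule sum.swap)
  also have "\<dots> = op_mult q n (op_mult q n A B) C y x"
    unfolding op_mult_def by (simp add: sum_distrib_right)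
  finally show "op_mult q n A (op_mult q n B C) y x = op_mult q n (op_mult q n A B) C y x" .
qed

lemma op_mult_id_left: "op_eq q n (op_mult q n op_id A) A"
  unfolding op_eq_def op_mult_def op_id_def
  by (simp add: finite_basis if_distrib[of "\<lambda>c. c * _"] cong: if_cong)

lemma op_mult_id_right: "op_eq q n (op_mult q n A op_id) A"
  unfolding op_eq_def op_mult_def op_id_def
  by (simp add: finite_basis if_distrib[of "\<lambda>c. _ * c"] cong: if_cong)

lemma op_inv_eqI:
  assumes "op_eq q n (op_mult q n L K) op_id" "op_eq q n (op_mult q n K L) op_id"
  shows "op_eq q n (op_inv q n K) L"
proof -
  let ?K' = "op_inv q n K"
  have inv: "op_eq q n (op_mult q n ?K' K) op_id \<and> op_eq q n (op_mult q n K ?K') op_id"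
    unfolding op_inv_def by (rule someI[of _ L]) (use assms in simp)
  have "op_eq q n ?K' (op_mult q n ?K' op_id)"
    by (rule op_eq_sym[OF op_mult_id_right])
  also have "op_eq q n \<dots> (op_mult q n ?K' (op_mult q n K L))"
    using op_eq_sym[OF assms(2)] by (intro op_mult_cong op_eq_refl)
  also have "op_mult q n ?K' (op_mult q n K L) = op_mult q n (op_mult q n ?K' K) L"
    by (rule op_mult_assoc)
  also have "op_eq q n \<dots> (op_mult q n op_id L)"
    using inv by (intro op_mult_cong op_eq_refl) simp
  also have "op_eq q n \<dots> L"
    by (rule op_mult_id_left)
  finally show ?thesis .
qed

lemma op_inv_mult_left:
  assumes "op_eq q n (op_mult q n L K) op_id" "op_eq q n (op_mult q n K L) op_id"
  shows "op_eq q n (op_mult q n (op_inv q n K) K) op_id"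
proof -
  have "op_eq q n (op_mult q n (op_inv q n K) K) (op_mult q n L K)"
    using op_inv_eqI[OF assms] by (intro op_mult_cong op_eq_refl)
  also have "op_eq q n \<dots> op_id" by (fact assms(1))
  finally show ?thesis .
qed

lemma op_mult_perm_op_right:
  assumes "f x \<in> basis q n"
  shows "op_mult q n A (perm_op f) y x = A y (f x)"
  using assms unfolding op_mult_def perm_op_def
  by (simp add: finite_basis if_distrib[of "\<lambda>c. _ * c"] cong: if_cong)

lemma op_mult_perm_op_left:
  assumes "f y \<in> basis q n" and "\<And>z. z \<in> basis q n \<Longrightarrow> y = g z \<longleftrightarrow> z = f y"
  shows "op_mult q n (perm_op g) B y x = B (f y) x"
proof -
  have "op_mult q n (perm_op g) B y x = (\<Sum>z\<in>basis q n. if z = f y then B z x else 0)"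
    unfolding op_mult_def perm_op_def using assms(2) by (intro sum.cong) auto
  with assms(1) show ?thesis by (simp add: finite_basis)
qed

lemma op_inv_perm_op:
  assumes "\<And>x. x \<in> basis q n \<Longrightarrow> f x \<in> basis q n" "\<And>x. x \<in> basis q n \<Longrightarrow> g x \<in> basis q n"
    and "\<And>x. x \<in> basis q n \<Longrightarrow> g (f x) = x" "\<And>x. x \<in> basis q n \<Longrightarrow> f (g x) = x"
  shows "op_eq q n (op_inv q n (perm_op f)) (perm_op g)"
proof (rule op_inv_eqI)
  show "op_eq q n (op_mult q n (perm_op g) (perm_op f)) op_id"
    using assms unfolding op_eq_def by (simp add: op_mult_perm_op_right) (auto simp: perm_op_def op_id_def)
  show "op_eq q n (op_mult q n (perm_op f) (perm_op g)) op_id"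
    using assms unfolding op_eq_def by (simp add: op_mult_perm_op_right) (auto simp: perm_op_def op_id_def)
qed

section \<open>Tensor powers\<close>

lemma sum_lists_prod:
  fixes f :: "nat \<Rightarrow> 'a \<Rightarrow> 'b::comm_semiring_1"
  assumes "finite A"
  shows "(\<Sum>xs | set xs \<subseteq> A \<and> length xs = m. \<Prod>i<m. f i (xs ! i)) = (\<Prod>i<m. \<Sum>a\<in>A. f i a)"
proof (induction m arbitrary: f)
  case 0
  have "{xs. set xs \<subseteq> A \<and> length xs = 0} = {[]}" by auto
  then show ?case by simp
next
  case (Suc m)
  let ?L = "{xs. set xs \<subseteq> A \<and> length xs = m}"
  have "(\<Sum>xs | set xs \<subseteq> A \<and> length xs = Suc m. \<Prod>i<Suc m. f i (xs ! i))
      = (\<Sum>(xs, a)\<in>?L \<times> A. \<Prod>i<Suc m. f i ((a # xs) ! i))"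
    unfolding lists_length_Suc_eq by (subst sum.reindex) (auto simp: inj_on_def case_prod_beta)
  also have "\<dots> = (\<Sum>(xs, a)\<in>?L \<times> A. f 0 a * (\<Prod>i<m. f (Suc i) (xs ! i)))"
    by (simp only: prod.lessThan_Suc_shift nth_Cons_0 nth_Cons_Suc)
  also have "\<dots> = (\<Sum>xs\<in>?L. \<Sum>a\<in>A. f 0 a * (\<Prod>i<m. f (Suc i) (xs ! i)))"
    by (rule sum.cartesian_product[symmetric])
  also have "\<dots> = (\<Sum>a\<in>A. f 0 a) * (\<Prod>i<m. \<Sum>a\<in>A. f (Suc i) a)"
    by (simp add: sum_distrib_left[symmetric] sum_distrib_right[symmetric] Suc.IH[of "\<lambda>i. f (Suc i)"])
  also have "\<dots> = (\<Prod>i<Suc m. \<Sum>a\<in>A. f i a)"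
    by (simp only: prod.lessThan_Suc_shift)
  finally show ?case .
qed

definition kron_power :: "(nat \<Rightarrow> nat \<Rightarrow> complex) \<Rightarrow> qop" where
  "kron_power A = (\<lambda>y x. \<Prod>i<length x. A (y ! i) (x ! i))"

lemma op_mult_kron_power:
  assumes "y \<in> basis q n" "x \<in> basis q n"
  shows "op_mult q n (kron_power A) (kron_power B) y x = (\<Prod>i<Suc n. \<Sum>c<q. A (y ! i) c * B c (x ! i))"
proof -
  have "op_mult q n (kron_power A) (kron_power B) y x
      = (\<Sum>z\<in>basis q n. \<Prod>i<Suc n. A (y ! i) (z ! i) * B (z ! i) (x ! i))"
    unfolding op_mult_def kron_power_def
    using assms by (intro sum.cong refl) (simp add: length_basis prod.distrib)
  also have "\<dots> = (\<Prod>i<Suc n. \<Sum>c<q. A (y ! i) c * B c (x ! i))"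
    unfolding basis_eq_lists by (rule sum_lists_prod) simp
  finally show ?thesis .
qed

lemma kron_power_mult_eq_op_id:
  assumes "\<And>a b. a < q \<Longrightarrow> b < q \<Longrightarrow> (\<Sum>c<q. A b c * B c a) = (if a = b then 1 else 0)"
  shows "op_eq q n (op_mult q n (kron_power A) (kron_power B)) op_id"
  unfolding op_eq_def
proof (intro ballI)
  fix y x assume y: "y \<in> basis q n" and x: "x \<in> basis q n"
  have "op_mult q n (kron_power A) (kron_power B) y x = (\<Prod>i<Suc n. if x ! i = y ! i then 1 else 0)"
    unfolding op_mult_kron_power[OF y x] using x y by (intro prod.cong refl assms) (auto intro: nth_basis_less)
  also have "\<dots> = op_id y x"
  proof (cases "x = y")
    case False
    then obtain i where "i < Suc n" "x ! i \<noteq> y ! i"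
      using x y by (metis length_basis nth_equalityI)
    then have "(\<Prod>i<Suc n. if x ! i = y ! i then 1 else 0) = (0::complex)"
      by (intro prod_zero) auto
    then show ?thesis using False by (simp add: op_id_def)
  qed (simp add: op_id_def)
  finally show "op_mult q n (kron_power A) (kron_power B) y x = op_id y x" .
qed

section \<open>The quantum Fourier transform\<close>

lemma zeta_power: "zeta q ^ k = cis (2 * pi * real k / real q)"
  by (simp add: zeta_def DeMoivre mult_ac)

lemma zeta_power_q: "q > 0 \<Longrightarrow> zeta q ^ q = 1"
  by (simp add: zeta_power)

lemma zeta_power_mod: "q > 0 \<Longrightarrow> zeta q ^ (k mod q) = zeta q ^ k"
  by (metis div_mult_mod_eq mult.commute power_add power_mult power_one zeta_power_q mult_1)

lemma inj_on_zeta_power: "q > 0 \<Longrightarrow> inj_on (\<lambda>k. zeta q ^ k) {..<q}"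
  using bij_betw_roots_unity[of q] by (simp add: zeta_power bij_betw_def)

lemma cnj_zeta: "cnj (zeta q) = inverse (zeta q)"
  by (simp add: zeta_def cis_cnj)

lemma sum_powers_root_of_unity:
  fixes w :: "'a::field"
  assumes "w ^ q = 1" "w \<noteq> 1"
  shows "(\<Sum>c<q. w ^ c) = 0"
  using assms by (simp add: geometric_sum)

lemma zeta_orthogonality:
  assumes "a < q" "b < q"
  shows "(\<Sum>c<q. zeta q ^ (a * c) * cnj (zeta q ^ (b * c))) = (if a = b then of_nat q else 0)"
proof -
  have q: "q > 0" using assms by simp
  have nz: "zeta q \<noteq> 0" by (simp add: zeta_def)
  define w where "w = zeta q ^ a / zeta q ^ b"
  have terms: "zeta q ^ (a * c) * cnj (zeta q ^ (b * c)) = w ^ c" for c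
    by (simp add: w_def cnj_zeta power_mult power_mult_distrib divide_inverse power_inverse)
  show ?thesis
  proof (cases "a = b")
    case True
    then show ?thesis unfolding terms by (simp add: w_def nz)
  next
    case False
    have "w ^ q = (zeta q ^ q) ^ a / (zeta q ^ q) ^ b"
      by (simp add: w_def power_divide flip: power_mult) (simp add: mult.commute)
    then have "w ^ q = 1" by (simp add: zeta_power_q[OF q])
    moreover have "w \<noteq> 1"
      using inj_on_zeta_power[OF q] False assms by (auto simp: w_def nz inj_on_def)
    ultimately show ?thesis unfolding terms using False by (simp add: sum_powers_root_of_unity)
  qed
qed

lemma H1_mult_cnj_H1: "H1 q c a * cnj (H1 q d b) = zeta q ^ (a * c) * cnj (zeta q ^ (b * d)) / of_nat q"
proof -
  have "complex_of_real (sqrt (real q)) * complex_of_real (sqrt (real q)) = of_nat q"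
    by (simp flip: of_real_mult)
  then show ?thesis by (simp add: H1_def)
qed

lemma H1_sym: "H1 q a b = H1 q b a"
  by (simp add: H1_def mult.commute)

lemma H1_adjoint_orthogonal:
  assumes "a < q" "b < q"
  shows "(\<Sum>c<q. cnj (H1 q c b) * H1 q c a) = (if a = b then 1 else 0)"
  using zeta_orthogonality[OF assms] assms
  by (simp add: mult.commute[of "cnj _"] H1_mult_cnj_H1 flip: sum_divide_distrib)

lemma H1_orthogonal_adjoint:
  assumes "a < q" "b < q"
  shows "(\<Sum>c<q. H1 q b c * cnj (H1 q a c)) = (if a = b then 1 else 0)"
  using zeta_orthogonality[OF assms(2,1)] assms
  by (simp add: H1_sym[of q b] H1_sym[of q a] H1_mult_cnj_H1 flip: sum_divide_distrib)

lemma Htensor_eq_kron_power: "Htensor q = kron_power (H1 q)"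
  by (simp add: Htensor_def kron_power_def)

lemma op_inv_Htensor_mult_Htensor: "op_eq q n (op_mult q n (op_inv q n (Htensor q)) (Htensor q)) op_id"
  unfolding Htensor_eq_kron_power
proof (rule op_inv_mult_left)
  show "op_eq q n (op_mult q n (kron_power (\<lambda>b c. cnj (H1 q c b))) (kron_power (H1 q))) op_id"
    by (intro kron_power_mult_eq_op_id H1_adjoint_orthogonal)
  show "op_eq q n (op_mult q n (kron_power (H1 q)) (kron_power (\<lambda>b c. cnj (H1 q c b)))) op_id"
    by (intro kron_power_mult_eq_op_id H1_orthogonal_adjoint)
qed

section \<open>Fanout and modular addition\<close>

text \<open>Subtraction of the last digit modulo \<open>q\<close>; the truncated \<open>q - b\<close> is harmless since \<open>b < q\<close>.\<close>

definition fanin_map :: "nat \<Rightarrow> nat list \<Rightarrow> nat list" where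
  "fanin_map q xs = map (\<lambda>x. (x + (q - last xs)) mod q) (butlast xs) @ [last xs]"

lemma fanout_map_snoc: "fanout_map q (xs @ [b]) = map (\<lambda>x. (x + b) mod q) xs @ [b]"
  by (simp add: fanout_map_def)

lemma fanin_map_snoc: "fanin_map q (xs @ [b]) = map (\<lambda>x. (x + (q - b)) mod q) xs @ [b]"
  by (simp add: fanin_map_def)

lemma modadd_map_snoc: "modadd_map q (xs @ [b]) = xs @ [(b + sum_list xs) mod q]"
  by (simp add: modadd_map_def)

lemma fanout_map_in_basis: "q > 0 \<Longrightarrow> x \<in> basis q n \<Longrightarrow> fanout_map q x \<in> basis q n"
  by (erule basis_snocE) (auto simp: fanout_map_snoc snoc_in_basis_iff)

lemma fanin_map_in_basis: "q > 0 \<Longrightarrow> x \<in> basis q n \<Longrightarrow> fanin_map q x \<in> basis q n"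
  by (erule basis_snocE) (auto simp: fanin_map_snoc snoc_in_basis_iff)

lemma modadd_map_in_basis: "q > 0 \<Longrightarrow> x \<in> basis q n \<Longrightarrow> modadd_map q x \<in> basis q n"
  by (erule basis_snocE) (auto simp: modadd_map_snoc snoc_in_basis_iff)

lemma fanin_fanout_map: "x \<in> basis q n \<Longrightarrow> fanin_map q (fanout_map q x) = x"
proof (erule basis_snocE)
  fix xs b assume x: "x = xs @ [b]" "set xs \<subseteq> {..<q}" "b < q"
  have "((v + b) mod q + (q - b)) mod q = v" if "v < q" for v
  proof -
    have "((v + b) mod q + (q - b)) mod q = (v + b + (q - b)) mod q"
      by (rule mod_add_left_eq)
    also have "v + b + (q - b) = v + q"
      using \<open>b < q\<close> by simp
    finally show ?thesis using that by simp
  qed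
  with x show ?thesis by (auto simp: fanout_map_snoc fanin_map_snoc intro!: map_idI)
qed

lemma fanout_fanin_map: "x \<in> basis q n \<Longrightarrow> fanout_map q (fanin_map q x) = x"
proof (erule basis_snocE)
  fix xs b assume x: "x = xs @ [b]" "set xs \<subseteq> {..<q}" "b < q"
  have "((v + (q - b)) mod q + b) mod q = v" if "v < q" for v
  proof -
    have "((v + (q - b)) mod q + b) mod q = (v + (q - b) + b) mod q"
      by (rule mod_add_left_eq)
    also have "v + (q - b) + b = v + q"
      using \<open>b < q\<close> by simp
    finally show ?thesis using that by simp
  qed
  with x show ?thesis by (auto simp: fanout_map_snoc fanin_map_snoc intro!: map_idI)
qed

lemma op_inv_F_op: "q > 0 \<Longrightarrow> op_eq q n (op_inv q n (F_op q)) (perm_op (fanin_map q))"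
  unfolding F_op_def
  by (intro op_inv_perm_op fanout_map_in_basis fanin_map_in_basis fanin_fanout_map fanout_fanin_map)

definition list_dot :: "nat list \<Rightarrow> nat list \<Rightarrow> nat" where
  "list_dot xs ys = (\<Sum>i<length xs. xs ! i * ys ! i)"

lemma list_dot_snoc:
  "length xs = length ys \<Longrightarrow> list_dot (xs @ [b]) (ys @ [d]) = list_dot xs ys + b * d"
  by (simp add: list_dot_def nth_append)

lemma list_dot_shift_mod:
  assumes "length xs = length ys"
  shows "list_dot xs (map (\<lambda>v. (v + d) mod q) ys) mod q = (list_dot xs ys + sum_list xs * d) mod q"
proof -
  have "list_dot xs (map (\<lambda>v. (v + d) mod q) ys) mod q
      = (\<Sum>i<length xs. xs ! i * ((ys ! i + d) mod q) mod q) mod q"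
    unfolding list_dot_def using assms by (simp add: mod_sum_eq)
  also have "\<dots> = (\<Sum>i<length xs. xs ! i * (ys ! i + d) mod q) mod q"
    by (simp only: mod_mult_right_eq)
  also have "\<dots> = (\<Sum>i<length xs. xs ! i * (ys ! i + d)) mod q"
    by (rule mod_sum_eq)
  also have "(\<Sum>i<length xs. xs ! i * (ys ! i + d)) = list_dot xs ys + sum_list xs * d"
    by (simp add: list_dot_def sum_list_sum_nth atLeast0LessThan distrib_left sum.distrib sum_distrib_right)
  finally show ?thesis .
qed

lemma Htensor_eq_zeta_power:
  "Htensor q y x = zeta q ^ list_dot x y / complex_of_real (sqrt (real q)) ^ length x"
  by (simp add: Htensor_def H1_def list_dot_def prod_dividef power_sum)

lemma list_dot_modadd_fanout:
  assumes "x \<in> basis q n" "y \<in> basis q n"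
  shows "list_dot (modadd_map q x) y mod q = list_dot x (fanout_map q y) mod q"
proof -
  obtain xs b where x: "x = xs @ [b]" "length xs = n" using assms(1) by (rule basis_snocE)
  obtain ys d where y: "y = ys @ [d]" "length ys = n" using assms(2) by (rule basis_snocE)
  have "list_dot (modadd_map q x) y mod q = (list_dot xs ys + (b + sum_list xs) mod q * d) mod q"
    using x y by (simp add: modadd_map_snoc list_dot_snoc)
  also have "\<dots> = (list_dot xs ys + (b + sum_list xs) * d) mod q"
    by (metis mod_add_right_eq mod_mult_left_eq)
  also have "\<dots> = ((list_dot xs ys + sum_list xs * d) mod q + b * d) mod q"
    unfolding mod_add_left_eq by (simp add: algebra_simps)
  also have "\<dots> = (list_dot xs (map (\<lambda>v. (v + d) mod q) ys) mod q + b * d) mod q"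
    using x y by (simp only: list_dot_shift_mod)
  also have "\<dots> = list_dot x (fanout_map q y) mod q"
    using x y by (simp add: fanout_map_snoc list_dot_snoc mod_add_left_eq)
  finally show ?thesis .
qed

lemma Htensor_modadd_eq_Htensor_fanout:
  assumes "q > 0" "x \<in> basis q n" "y \<in> basis q n"
  shows "Htensor q y (modadd_map q x) = Htensor q (fanout_map q y) x"
proof -
  have "length (modadd_map q x) = length x"
    using length_basis[OF modadd_map_in_basis[OF assms(1,2)]] length_basis[OF assms(2)] by simp
  moreover have "zeta q ^ list_dot (modadd_map q x) y = zeta q ^ list_dot x (fanout_map q y)"
    using assms by (metis zeta_power_mod list_dot_modadd_fanout)
  ultimately show ?thesis by (simp add: Htensor_eq_zeta_power)
qed

lemma fanin_mult_Htensor_eq_Htensor_mult_M: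
  assumes "q > 0"
  shows "op_eq q n (op_mult q n (perm_op (fanin_map q)) (Htensor q)) (op_mult q n (Htensor q) (M_op q))"
  unfolding op_eq_def M_op_def
proof (intro ballI)
  fix y x assume y: "y \<in> basis q n" and x: "x \<in> basis q n"
  have "op_mult q n (perm_op (fanin_map q)) (Htensor q) y x = Htensor q (fanout_map q y) x"
  proof (rule op_mult_perm_op_left)
    show "fanout_map q y \<in> basis q n" using assms y by (rule fanout_map_in_basis)
    show "y = fanin_map q z \<longleftrightarrow> z = fanout_map q y" if "z \<in> basis q n" for z
      using that y fanin_fanout_map fanout_fanin_map by metis
  qed
  also have "\<dots> = Htensor q y (modadd_map q x)"
    using assms x y by (rule Htensor_modadd_eq_Htensor_fanout[symmetric])
  also have "\<dots> = op_mult q n (Htensor q) (perm_op (modadd_map q)) y x"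
    using assms x by (intro op_mult_perm_op_right[symmetric] modadd_map_in_basis)
  finally show "op_mult q n (perm_op (fanin_map q)) (Htensor q) y x
      = op_mult q n (Htensor q) (perm_op (modadd_map q)) y x" .
qed

theorem mainTheorem3:
  fixes q n :: nat
  assumes "q \<ge> 2" and "n \<ge> 1"
  shows "op_eq q n (M_op q)
           (op_mult q n (op_inv q n (Htensor q))
              (op_mult q n (op_inv q n (F_op q)) (Htensor q)))"
proof -
  have q: "q > 0" using assms(1) by simp
  let ?H = "Htensor q" and ?H' = "op_inv q n (Htensor q)"
  have "op_eq q n (op_mult q n ?H' (op_mult q n (op_inv q n (F_op q)) ?H))
      (op_mult q n ?H' (op_mult q n (perm_op (fanin_map q)) ?H))"
    by (intro op_mult_cong op_eq_refl op_inv_F_op q)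
  also have "op_eq q n \<dots> (op_mult q n ?H' (op_mult q n ?H (M_op q)))"
    by (intro op_mult_cong op_eq_refl fanin_mult_Htensor_eq_Htensor_mult_M q)
  also have "\<dots> = op_mult q n (op_mult q n ?H' ?H) (M_op q)"
    by (rule op_mult_assoc)
  also have "op_eq q n \<dots> (op_mult q n op_id (M_op q))"
    by (intro op_mult_cong op_eq_refl op_inv_Htensor_mult_Htensor)
  also have "op_eq q n \<dots> (M_op q)"
    by (rule op_mult_id_left)
  finally show ?thesis by (rule op_eq_sym)
qed

end
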